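(* Assume $\eta$ is supported on $\{\mathbf{x}\in E:|\mathbf{x}|_\infty\le R\}$ for some $R>0$. Let $\rho$ be a Borel probability measure on $\mathsf{X}$ and let $Y$ be a discrete-time Markov process on $\mathsf{X}$ with transition kernel $\mu$ and $Y_0\sim\rho$. Let $k_1,k_2$ be nonnegative integers. Then $|f_n(Y_{k_2})-f_n(Y_{k_1})|_\infty\le 2g(Y_0)+(k_1+k_2)R$ almost surely.
   Context: Fix $\theta_a,\theta_d>0$, positive integers $n,N$, $E=\mathbb{R}^N$ with the $\infty$-norm $|\cdot|_\infty$, and a Borel probability measure $\eta$ on $E$ with finite mean. $[k]=\{0,\dots,k-1\}$; $|\psi|=\sum_{i\in[n]}\psi(i)$. State space: $\mathsf{X}=\{(\psi,\mathbf{v})\in\{0,1\}^{[n]}\times E^{[n+1]}:\sum_{i\in[n]}\psi(i)(\mathbf{v}(i)-\mathbf{v}(n))=0\}$ (subspace of the product topology, discrete on $\{0,1\}$, Euclidean on $E$). For $i\in[n]$: $r_i(\psi)=\frac{\theta_d\psi(i)+\theta_a(1-\psi(i))}{\theta_d|\psi|+\theta_a(n-|\psi|)}$; $s_i(\psi)$ agrees with $\psi$ except $s_i(\psi)(i)=1-\psi(i)$. For $\mathsf{x}=(\psi,\mathbf{v})\in\mathsf{X}$, $\lambda_i^{\mathsf{x}}$ is the law of $(s_i(\psi),\mathbf{w})$ with $\mathbf{w}(j)=\mathbf{v}(j)$ for $j\in[n]\setminus\{i\}$ and $(\mathbf{w}(i),\mathbf{w}(n))$ equal to $(\mathbf{v}(i),\mathbf{v}(n))$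 if $|\psi|=\psi(i)=1$; $(\mathbf{v}(i),\mathbf{v}(n)-\frac{\mathbf{v}(i)-\mathbf{v}(n)}{|\psi|-1})$ if $|\psi|>\psi(i)=1$; $(\mathbf{x}+\mathbf{v}(n),\frac{\mathbf{x}}{|\psi|+1}+\mathbf{v}(n))$ with $\mathbf{x}\sim\eta$ if $\psi(i)=0$. $\mu(\mathsf{x},B)=\sum_{i\in[n]}r_i(\psi)\lambda_i^{\mathsf{x}}(B)$. $f_i(\psi,\mathbf{v})=\mathbf{v}(i)$ for $i\in[n+1]$, and $g(\mathsf{x})=\max\{|f_i(\mathsf{x})|_\infty:i\in[n+1]\}$. *)

theory Defs
  imports "HOL-Probability.Probability"
begin

text \<open>States (psi, v): psi is a 0/1 vector indexed by [n] (extensional on {..<n}),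
  v a vector of points of E = real^'N indexed by [n+1] (extensional on {..n}).\<close>

type_synonym 'N state = "(nat \<Rightarrow> bool) \<times> (nat \<Rightarrow> real^'N)"

definition cardpsi :: "nat \<Rightarrow> (nat \<Rightarrow> bool) \<Rightarrow> nat" where
  "cardpsi n psi = card {i. i < n \<and> psi i}"

definition Xset :: "nat \<Rightarrow> ('N::finite) state set" where
  "Xset n = {(psi, v). psi \<in> extensional {..<n} \<and> v \<in> extensional {..n} \<and>
              (\<Sum>i<n. (if psi i then 1 else 0) *\<^sub>R (v i - v n)) = 0}"

definition XM :: "nat \<Rightarrow> ('N::finite) state measure" where
  "XM n = restrict_space
     ((\<Pi>\<^sub>M i\<in>{..<n}. (count_space UNIV :: bool measure)) \<Otimes>\<^sub>M (\<Pi>\<^sub>M i\<in>{..n}. (borel :: (real^'N) measure)))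
     (Xset n)"

definition rate :: "real \<Rightarrow> real \<Rightarrow> nat \<Rightarrow> (nat \<Rightarrow> bool) \<Rightarrow> nat \<Rightarrow> real" where
  "rate \<theta>a \<theta>d n psi i =
     (if psi i then \<theta>d else \<theta>a) /
     (\<theta>d * real (cardpsi n psi) + \<theta>a * (real n - real (cardpsi n psi)))"

definition lam :: "(real^'N::finite) measure \<Rightarrow> nat \<Rightarrow> nat \<Rightarrow> 'N state \<Rightarrow> 'N state set \<Rightarrow> real" where
  "lam \<eta> n i x B =
    (let psi = fst x; v = snd x; c = cardpsi n psi in
     if psi i then
       (if c = 1 then indicator B (psi(i := False), v)
        else indicator B (psi(i := False), v(n := v n - (1 / (real c - 1)) *\<^sub>R (v i - v n))))
     else measure \<eta> {y \<in> space \<eta>.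
            (psi(i := True), v(i := y + v n, n := (1 / (real c + 1)) *\<^sub>R y + v n)) \<in> B})"

definition mu :: "(real^'N::finite) measure \<Rightarrow> real \<Rightarrow> real \<Rightarrow> nat \<Rightarrow> 'N state \<Rightarrow> 'N state set \<Rightarrow> real" where
  "mu \<eta> \<theta>a \<theta>d n x B = (\<Sum>i<n. rate \<theta>a \<theta>d n (fst x) i * lam \<eta> n i x B)"

definition gfun :: "nat \<Rightarrow> ('N::finite) state \<Rightarrow> real" where
  "gfun n x = Max ((\<lambda>i. infnorm (snd x i)) ` {..n})"

text \<open>Y is a discrete-time Markov process (w.r.t. its natural filtration) with kernel mu:
  finite-dimensional cylinder characterisation of P(Y_{k+1} \<in> B | Y_0..Y_k) = mu(Y_k, B).\<close>
definition markov_chain ::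
  "'a measure \<Rightarrow> ('N::finite) state measure \<Rightarrow> ('N state \<Rightarrow> 'N state set \<Rightarrow> real) \<Rightarrow> (nat \<Rightarrow> 'a \<Rightarrow> 'N state) \<Rightarrow> bool" where
  "markov_chain M S K Y \<longleftrightarrow>
     (\<forall>k. Y k \<in> measurable M S) \<and>
     (\<forall>k (B :: nat \<Rightarrow> 'N state set). (\<forall>i\<le>Suc k. B i \<in> sets S) \<longrightarrow>
        measure M {\<omega> \<in> space M. \<forall>i\<le>Suc k. Y i \<omega> \<in> B i} =
        (\<integral>\<omega>. indicator {\<omega> \<in> space M. \<forall>i\<le>k. Y i \<omega> \<in> B i} \<omega> * K (Y k \<omega>) (B (Suc k)) \<partial>M))"

end

theory Submission
  imports Defs
begin

text \<open>A jump of the chain changes at most two coordinates of \<open>v\<close>. A birth puts the new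
  particle at \<open>v n + x\<close> and moves the centre to \<open>v n + x/(c+1)\<close>, both within \<open>g + R\<close> since
  \<open>|x| \<le> R\<close>. A death moves the centre to \<open>v n - (v i - v n)/(c-1)\<close>, which by the constraint
  defining \<open>X\<close> is the mean of the remaining occupied positions, hence within \<open>g\<close>. So \<open>g\<close> grows
  by at most \<open>R\<close> per step, giving \<open>g(Y\<^sub>k) \<le> g(Y\<^sub>0) + kR\<close> almost surely, and the claim follows from
  the triangle inequality for the centre coordinate.\<close>

lemma infnorm_sum_le:
  fixes f :: "'i \<Rightarrow> 'a::euclidean_space"
  shows "infnorm (\<Sum>j\<in>F. f j) \<le> (\<Sum>j\<in>F. infnorm (f j))"
proof (induction F rule: infinite_finite_induct)
  case (insert x F)
  then show ?case
    using infnorm_triangle[of "f x" "sum f F"] by simp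
qed (auto simp: infnorm_0)

text \<open>For \<open>A = {}\<close> the mean is \<open>0\<close> (as \<open>1 / 0 = 0\<close>), hence the hypothesis \<open>0 \<le> G\<close>.\<close>

lemma infnorm_mean_le:
  fixes f :: "'i \<Rightarrow> 'a::euclidean_space"
  assumes "finite A" "0 \<le> G" and bound: "\<And>j. j \<in> A \<Longrightarrow> infnorm (f j) \<le> G"
  shows "infnorm ((1 / real (card A)) *\<^sub>R (\<Sum>j\<in>A. f j)) \<le> G"
proof (cases "A = {}")
  case False
  then have card_pos: "real (card A) > 0"
    using assms by (simp add: card_gt_0_iff)
  have "infnorm (\<Sum>j\<in>A. f j) \<le> real (card A) * G"
    using infnorm_sum_le[of f A] sum_mono[of A "\<lambda>j. infnorm (f j)" "\<lambda>_. G"] bound by simp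
  then show ?thesis
    using card_pos by (simp add: infnorm_mul field_simps)
qed (simp add: assms infnorm_0)

lemma infnorm_le_gfun: "j \<le> n \<Longrightarrow> infnorm (snd x j) \<le> gfun n x"
  unfolding gfun_def by (rule Max_ge) auto

lemma gfun_le_iff: "gfun n x \<le> b \<longleftrightarrow> (\<forall>j\<le>n. infnorm (snd x j) \<le> b)"
  unfolding gfun_def by (subst Max_le_iff) auto

lemma gfun_nonneg: "0 \<le> gfun n x"
  using infnorm_le_gfun[of 0 n x] infnorm_pos_le[of "snd x 0"] by simp

lemma Xset_sum_occupied:
  assumes "(psi, v) \<in> Xset n"
  shows "(\<Sum>j\<in>{j. j < n \<and> psi j}. v j) = real (cardpsi n psi) *\<^sub>R v n"
proof -
  have "{j. j < n \<and> psi j} = {j\<in>{..<n}. psi j}"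
    by auto
  then have "(\<Sum>j\<in>{j. j < n \<and> psi j}. v j - v n) = (\<Sum>j<n. if psi j then v j - v n else 0)"
    using sum.inter_filter[of "{..<n}" "\<lambda>j. v j - v n" psi] by simp
  also have "\<dots> = (\<Sum>j<n. (if psi j then 1 else 0) *\<^sub>R (v j - v n))"
    by (intro sum.cong) auto
  also have "\<dots> = 0"
    using assms unfolding Xset_def by auto
  finally show ?thesis
    by (simp add: sum_subtractf sum_constant_scaleR cardpsi_def del: sum_constant)
qed

lemma death_centre_eq_mean:
  assumes X: "(psi, v) \<in> Xset n" and i: "i < n" "psi i" and c: "cardpsi n psi \<noteq> 1"
  defines "A \<equiv> {j. j < n \<and> psi j} - {i}"
  shows "v n - (1 / (real (cardpsi n psi) - 1)) *\<^sub>R (v i - v n) = (1 / real (card A)) *\<^sub>R (\<Sum>j\<in>A. v j)"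
proof -
  define d where "d = real (cardpsi n psi) - 1"
  have "i \<in> {j. j < n \<and> psi j}"
    using i by simp
  then have "cardpsi n psi \<ge> 2"
    using c card_gt_0_iff[of "{j. j < n \<and> psi j}"] unfolding cardpsi_def by fastforce
  then have card_A: "real (card A) = d" and d_pos: "d > 0" and sum_A: "(\<Sum>j\<in>A. v j) = (d + 1) *\<^sub>R v n - v i"
    using i Xset_sum_occupied[OF X] unfolding A_def d_def cardpsi_def
    by (auto simp: sum_diff1 of_nat_diff)
  have "v n - (1 / d) *\<^sub>R (v i - v n) = ((d + 1) / d) *\<^sub>R v n - (1 / d) *\<^sub>R v i"
    using d_pos by (simp add: scaleR_diff_right add_divide_distrib algebra_simps)
  also have "\<dots> = (1 / d) *\<^sub>R (\<Sum>j\<in>A. v j)"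
    by (simp add: sum_A scaleR_diff_right)
  finally show ?thesis
    by (simp add: d_def card_A)
qed

lemma death_gfun_le:
  assumes X: "(psi, v) \<in> Xset n" and i: "i < n" "psi i" and c: "cardpsi n psi \<noteq> 1"
  shows "gfun n (p, v(n := v n - (1 / (real (cardpsi n psi) - 1)) *\<^sub>R (v i - v n))) \<le> gfun n (psi, v)"
proof -
  define A where "A = {j. j < n \<and> psi j} - {i}"
  have "finite A"
    unfolding A_def by simp
  moreover have "0 \<le> gfun n (psi, v)"
    by (rule gfun_nonneg)
  moreover have "\<And>j. j \<in> A \<Longrightarrow> infnorm (v j) \<le> gfun n (psi, v)"
    unfolding A_def using infnorm_le_gfun[of _ n "(psi, v)"] by auto
  ultimately have "infnorm (v n - (1 / (real (cardpsi n psi) - 1)) *\<^sub>R (v i - v n)) \<le> gfun n (psi, v)"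
    unfolding death_centre_eq_mean[OF assms] A_def[symmetric] by (rule infnorm_mean_le)
  then show ?thesis
    using infnorm_le_gfun[of _ n "(psi, v)"] by (auto simp: gfun_le_iff)
qed

lemma birth_gfun_le:
  assumes "i \<le> n" and y: "infnorm y \<le> R"
  shows "gfun n (p, v(i := y + v n, n := (1 / (real c + 1)) *\<^sub>R y + v n)) \<le> gfun n (q, v) + R"
proof -
  define G where "G = gfun n (q, v)"
  have v_le: "infnorm (v j) \<le> G" if "j \<le> n" for j
    using infnorm_le_gfun[OF that, of "(q, v)"] by (simp add: G_def)
  have "infnorm ((1 / (real c + 1)) *\<^sub>R y) \<le> infnorm y"
    using infnorm_pos_le[of y] by (simp add: infnorm_mul divide_le_eq mult_le_cancel_left1)
  then have "infnorm ((1 / (real c + 1)) *\<^sub>R y + v n) \<le> G + R"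
    using infnorm_triangle[of "(1 / (real c + 1)) *\<^sub>R y" "v n"] v_le[of n] y by linarith
  moreover have "infnorm (y + v n) \<le> G + R"
    using infnorm_triangle[of y "v n"] v_le[of n] y by linarith
  moreover have "0 \<le> R"
    using y infnorm_pos_le[of y] by linarith
  ultimately show ?thesis
    using v_le by (auto simp: gfun_le_iff G_def[symmetric] add_increasing2)
qed

lemma lam_gfun_exceeds_eq_0:
  fixes x :: "'N::finite state"
  assumes X: "x \<in> Xset n" and i: "i < n" and \<eta>: "AE y in \<eta>. infnorm y \<le> R" and "0 \<le> R"
    and B: "B \<subseteq> {z. b < gfun n z}" and b: "gfun n x + R \<le> b"
  shows "lam \<eta> n i x B = 0"
proof -
  obtain psi v where x: "x = (psi, v)"
    by (cases x)
  define c where "c = cardpsi n psi"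
  have not_in_B: "z \<notin> B" if "gfun n z \<le> gfun n x + R" for z
    using B b that by auto
  show ?thesis
  proof (cases "psi i")
    case True
    have "gfun n (psi(i := False), v) \<le> gfun n x + R"
      using \<open>0 \<le> R\<close> by (simp add: x gfun_def)
    moreover have "c \<noteq> 1 \<Longrightarrow>
        gfun n (psi(i := False), v(n := v n - (1 / (real c - 1)) *\<^sub>R (v i - v n))) \<le> gfun n x + R"
      using death_gfun_le[of psi v n i "psi(i := False)"] X i True \<open>0 \<le> R\<close> by (simp add: x c_def)
    ultimately show ?thesis
      using True not_in_B by (simp add: lam_def Let_def x c_def[symmetric])
  next
    case False
    have "AE y in \<eta>. (psi(i := True), v(i := y + v n, n := (1 / (real c + 1)) *\<^sub>R y + v n)) \<notin> B"
      using \<eta> by eventually_elim (auto simp: x intro!: not_in_B birth_gfun_le less_imp_le[OF i])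
    then have "measure \<eta> {y \<in> space \<eta>. (psi(i := True), v(i := y + v n, n := (1 / (real c + 1)) *\<^sub>R y + v n)) \<in> B} = 0"
      by (simp add: measure_def emeasure_eq_0_AE)
    then show ?thesis
      using False by (simp add: lam_def Let_def x c_def[symmetric])
  qed
qed

lemma mu_gfun_exceeds_eq_0:
  fixes x :: "'N::finite state"
  assumes "x \<in> Xset n" and "AE y in \<eta>. infnorm y \<le> R" and "0 \<le> R"
    and "B \<subseteq> {z. b < gfun n z}" and "gfun n x + R \<le> b"
  shows "mu \<eta> \<theta>a \<theta>d n x B = 0"
  unfolding mu_def using lam_gfun_exceeds_eq_0[OF assms(1) _ assms(2-5)] by simp

lemma gfun_measurable: "gfun n \<in> borel_measurable (XM n)"
  unfolding XM_def gfun_def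
  by (intro measurable_restrict_space1 borel_measurable_Max finite_atMost
      borel_measurable_continuous_on[where f=infnorm] continuous_intros
      measurable_compose[OF measurable_snd measurable_component_singleton]) simp

lemma space_XM_subset: "space (XM n) \<subseteq> Xset n"
  unfolding XM_def by (simp add: space_restrict_space)

lemma markov_chain_AE_not_cylinder:
  assumes M: "prob_space M" and Y: "markov_chain M S K Y" and B: "\<forall>i\<le>Suc k. B i \<in> sets S"
    and K: "AE \<omega> in M. (\<forall>i\<le>k. Y i \<omega> \<in> B i) \<longrightarrow> K (Y k \<omega>) (B (Suc k)) = 0"
  shows "AE \<omega> in M. \<not> (\<forall>i\<le>Suc k. Y i \<omega> \<in> B i)"
proof -
  have Y_meas: "Y i \<in> measurable M S" for i
    using Y unfolding markov_chain_def by blast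
  have "{\<omega> \<in> space M. Y i \<omega> \<in> B i} \<in> sets M" if "i \<le> Suc k" for i
    using measurable_sets[OF Y_meas, of "B i" i] B that by (simp add: vimage_def Int_def conj_commute)
  then have cylinder: "{\<omega> \<in> space M. \<forall>i\<le>Suc k. Y i \<omega> \<in> B i} \<in> sets M"
    using sets.sets_Collect_finite_All[of "{..Suc k}" M "\<lambda>i \<omega>. Y i \<omega> \<in> B i"] by simp
  have "(\<integral>\<omega>. indicator {\<omega> \<in> space M. \<forall>i\<le>k. Y i \<omega> \<in> B i} \<omega> * K (Y k \<omega>) (B (Suc k)) \<partial>M) = 0"
    using K by (intro integral_eq_zero_AE) (auto elim!: AE_mp intro!: AE_I2 split: split_indicator)
  then have "measure M {\<omega> \<in> space M. \<forall>i\<le>Suc k. Y i \<omega> \<in> B i} = 0"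
    using Y B unfolding markov_chain_def by simp
  then show ?thesis
    using AE_iff_measurable[OF cylinder, of "\<lambda>\<omega>. \<not> (\<forall>i\<le>Suc k. Y i \<omega> \<in> B i)"] finite_measure.emeasure_eq_measure[OF prob_space.axioms(1)[OF M]] by simp
qed

lemma markov_chain_AE_threshold:
  assumes M: "prob_space M" and Y: "markov_chain M S K Y" and h: "h \<in> borel_measurable S"
    and K: "\<And>x b. x \<in> space S \<Longrightarrow> h x + R \<le> b \<Longrightarrow> K x {z \<in> space S. b < h z} = 0"
  shows "AE \<omega> in M. h (Y 0 \<omega>) \<le> a \<longrightarrow> h (Y k \<omega>) \<le> a + real k * R"
proof (induction k)
  case (Suc k)
  define B where "B i = (if i = 0 then {x \<in> space S. h x \<le> a}
      else if i = Suc k then {x \<in> space S. a + real (Suc k) * R < h x} else space S)" for i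
  have Y_space: "Y i \<omega> \<in> space S" if "\<omega> \<in> space M" for i \<omega>
    using Y that unfolding markov_chain_def by (meson measurable_space)
  have "AE \<omega> in M. \<not> (\<forall>i\<le>Suc k. Y i \<omega> \<in> B i)"
  proof (rule markov_chain_AE_not_cylinder[OF M Y])
    show "\<forall>i\<le>Suc k. B i \<in> sets S"
      using h by (simp add: B_def)
    show "AE \<omega> in M. (\<forall>i\<le>k. Y i \<omega> \<in> B i) \<longrightarrow> K (Y k \<omega>) (B (Suc k)) = 0"
      using Suc.IH AE_space
    proof eventually_elim
      case (elim \<omega>)
      show ?case
      proof
        assume "\<forall>i\<le>k. Y i \<omega> \<in> B i"
        then have "h (Y k \<omega>) + R \<le> a + real (Suc k) * R"
          using elim by (auto simp: B_def algebra_simps)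
        then show "K (Y k \<omega>) (B (Suc k)) = 0"
          using K Y_space[OF \<open>\<omega> \<in> space M\<close>] by (simp add: B_def)
      qed
    qed
  qed
  with AE_space show ?case
    by eventually_elim (auto simp: B_def Y_space not_le split: if_splits)
qed simp

lemma AE_le_of_thresholds:
  fixes f g :: "'a \<Rightarrow> real"
  assumes "\<And>a. AE \<omega> in M. f \<omega> \<le> a \<longrightarrow> g \<omega> \<le> a + c"
  shows "AE \<omega> in M. g \<omega> \<le> f \<omega> + c"
proof -
  have "AE \<omega> in M. \<forall>q::rat. f \<omega> \<le> of_rat q \<longrightarrow> g \<omega> \<le> of_rat q + c"
    using assms by (simp add: AE_all_countable)
  then show ?thesis
  proof eventually_elim
    case (elim \<omega>)
    show ?case
    proof (rule ccontr)
      assume "\<not> g \<omega> \<le> f \<omega> + c"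
      then obtain q :: rat where "f \<omega> < of_rat q" "of_rat q < g \<omega> - c"
        using Rats_dense_in_real[of "f \<omega>" "g \<omega> - c"] by (auto elim!: Rats_cases)
      then show False
        using elim[rule_format, of q] by linarith
    qed
  qed
qed

lemma markov_chain_AE_bounded_increments:
  assumes "prob_space M" and "markov_chain M S K Y" and "h \<in> borel_measurable S"
    and "\<And>x b. x \<in> space S \<Longrightarrow> h x + R \<le> b \<Longrightarrow> K x {z \<in> space S. b < h z} = 0"
  shows "AE \<omega> in M. h (Y k \<omega>) \<le> h (Y 0 \<omega>) + real k * R"
  using markov_chain_AE_threshold[OF assms] by (rule AE_le_of_thresholds)

theorem lemma4:
  fixes \<theta>a \<theta>d R :: real and n k1 k2 :: nat
    and \<eta> :: "(real^'N::finite) measure" and \<rho> :: "'N state measure"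
    and M :: "'a measure" and Y :: "nat \<Rightarrow> 'a \<Rightarrow> 'N state"
  assumes "\<theta>a > 0" and "\<theta>d > 0" and "n > 0"
    and "prob_space \<eta>" and "sets \<eta> = sets borel" and "integrable \<eta> (\<lambda>x. x)"
    and "R > 0" and "AE x in \<eta>. infnorm x \<le> R"
    and "prob_space \<rho>" and "sets \<rho> = sets (XM n)"
    and "prob_space M"
    and "markov_chain M (XM n) (mu \<eta> \<theta>a \<theta>d n) Y"
    and "distr M (XM n) (Y 0) = \<rho>"
  shows "AE \<omega> in M. infnorm (snd (Y k2 \<omega>) n - snd (Y k1 \<omega>) n)
                     \<le> 2 * gfun n (Y 0 \<omega>) + real (k1 + k2) * R"
proof -
  have gfun_growth: "AE \<omega> in M. gfun n (Y k \<omega>) \<le> gfun n (Y 0 \<omega>) + real k * R" for k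
    using assms(11,12) gfun_measurable
  proof (rule markov_chain_AE_bounded_increments)
    fix x :: "'N state" and b assume "x \<in> space (XM n)" "gfun n x + R \<le> b"
    then show "mu \<eta> \<theta>a \<theta>d n x {z \<in> space (XM n). b < gfun n z} = 0"
      using space_XM_subset assms(7,8) by (intro mu_gfun_exceeds_eq_0) auto
  qed
  from gfun_growth[of k1] gfun_growth[of k2] show ?thesis
  proof eventually_elim
    case (elim \<omega>)
    have "infnorm (snd (Y k2 \<omega>) n - snd (Y k1 \<omega>) n) \<le> gfun n (Y k2 \<omega>) + gfun n (Y k1 \<omega>)"
      using infnorm_triangle[of "snd (Y k2 \<omega>) n" "- snd (Y k1 \<omega>) n"]
        infnorm_le_gfun[of n n "Y k1 \<omega>"] infnorm_le_gfun[of n n "Y k2 \<omega>"]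
      by (simp add: infnorm_neg)
    with elim show ?case
      by (simp add: algebra_simps)
  qed
qed

end
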